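(* Let $P$ be a lattice-face $d$-simplex with vertices $v_1,\dots,v_{d+1}$. For every $\sigma\in\mathfrak S_d$, every $1\le k\le d$ and every $0\le j\le k-1$, $$\frac{\mathfrak m(\sigma,k;j)}{\det Y(\sigma,k)}\in\mathbb Z .$$
   Context: Write $v_i=(x_{i,1},\dots,x_{i,d})$. $Y(\sigma,k)$ is the $k\times k$ matrix with rows $(1,x_{\sigma(r),1},\dots,x_{\sigma(r),k-1})$, $r=1,\dots,k$. Let $A(\sigma,k)$ be the $k\times(k+1)$ matrix with rows $(1,x_{\sigma(r),1},\dots,x_{\sigma(r),k})$, $r=1,\dots,k$, with columns indexed $1,\dots,k+1$; $\mathfrak m(\sigma,k;j)$ is the determinant of the $k\times k$ matrix obtained from $A(\sigma,k)$ by deleting column $j+1$ (so $\mathfrak m(\sigma,k;k)=\det Y(\sigma,k)$). Lattice-face polytopes are defined recursively, with $\pi:\mathbb R^d\to\mathbb R^{d-1}$ forgetting the last coordinate: a segment in $\mathbb R$ is lattice-face if its endpoints are integers; for $d\ge2$, a $d$-polytope $P\subset\mathbb R^d$ with vertex set $V$ is lattice-face if for every $d$-element $U\subset V$: (a) $\pi(\mathrm{conv}(U))$ is a lattice-face polytope in $\mathbb R^{d-1}$, and (b) $\pi(H_U\cap\mathbb Z^d)=\mathbb Z^{d-1}$, $H_U$ the affine span of $U$. *)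

theory Defs
  imports Complex_Main "HOL-Combinatorics.Permutations" "Jordan_Normal_Form.Determinant"
begin

text \<open>Points of R^d are modelled as functions nat => real whose coordinates
outside {1..d} vanish; coordinate i of p is p i.\<close>

type_synonym pt = "nat \<Rightarrow> real"

definition Rd :: "nat \<Rightarrow> pt set" where
  "Rd d = {p. \<forall>i. (i = 0 \<or> d < i) \<longrightarrow> p i = 0}"

definition lattice_pts :: "nat \<Rightarrow> pt set" where
  "lattice_pts d = {p \<in> Rd d. \<forall>i\<in>{1..d}. p i \<in> \<int>}"

definition proj :: "nat \<Rightarrow> pt \<Rightarrow> pt" where
  "proj d p = (\<lambda>i. if i = d then 0 else p i)"

definition conv_hull :: "pt set \<Rightarrow> pt set" where
  "conv_hull V = {x. \<exists>c. (\<forall>v\<in>V. 0 \<le> c v) \<and> sum c V = 1 \<and> x = (\<lambda>i. \<Sum>v\<in>V. c v * v i)}"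

definition aff_span :: "pt set \<Rightarrow> pt set" where
  "aff_span V = {x. \<exists>c. sum c V = 1 \<and> x = (\<lambda>i. \<Sum>v\<in>V. c v * v i)}"

definition aff_indep :: "pt set \<Rightarrow> bool" where
  "aff_indep V \<longleftrightarrow> finite V \<and> (\<forall>v\<in>V. v \<notin> aff_span (V - {v}))"

definition verts :: "pt set \<Rightarrow> pt set" where
  "verts S = {p \<in> S. p \<notin> conv_hull (S - {p})}"

text \<open>lattice_face d V: V is the vertex set of a d-dimensional polytope in R^d
  that is lattice-face (recursive definition).\<close>
fun lattice_face :: "nat \<Rightarrow> pt set \<Rightarrow> bool" where
  "lattice_face 0 V = False"
| "lattice_face (Suc 0) V \<longleftrightarrow> finite V \<and> V \<subseteq> Rd 1 \<and> card V = 2 \<and> (\<forall>v\<in>V. v 1 \<in> \<int>)"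
| "lattice_face (Suc (Suc n)) V \<longleftrightarrow>
     finite V \<and> V \<subseteq> Rd (Suc (Suc n)) \<and> verts V = V \<and>
     (\<exists>W\<subseteq>V. card W = n + 3 \<and> aff_indep W) \<and>
     (\<forall>U\<subseteq>V. card U = Suc (Suc n) \<longrightarrow>
        lattice_face (Suc n) (verts (proj (Suc (Suc n)) ` U)) \<and>
        proj (Suc (Suc n)) ` (aff_span U \<inter> lattice_pts (Suc (Suc n))) = lattice_pts (Suc n))"

text \<open>Y(sigma,k): k x k matrix with rows (1, x_{sigma r,1},...,x_{sigma r,k-1}), r = 1..k
  (Jordan_Normal_Form matrices are 0-indexed).\<close>
definition Ymat :: "(nat \<Rightarrow> pt) \<Rightarrow> (nat \<Rightarrow> nat) \<Rightarrow> nat \<Rightarrow> real mat" where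
  "Ymat v \<sigma> k = mat k k (\<lambda>(r, c). if c = 0 then 1 else v (\<sigma> (r + 1)) c)"

text \<open>A(sigma,k) has rows (1, x_{sigma r,1},...,x_{sigma r,k}); m(sigma,k;j) is the
  determinant after deleting column j+1 (1-indexed), i.e. 0-indexed column j.\<close>
definition Amat_entry :: "(nat \<Rightarrow> pt) \<Rightarrow> (nat \<Rightarrow> nat) \<Rightarrow> nat \<Rightarrow> nat \<Rightarrow> real" where
  "Amat_entry v \<sigma> r c = (if c = 0 then 1 else v (\<sigma> (r + 1)) c)"

definition minor_m :: "(nat \<Rightarrow> pt) \<Rightarrow> (nat \<Rightarrow> nat) \<Rightarrow> nat \<Rightarrow> nat \<Rightarrow> real" where
  "minor_m v \<sigma> k j = det (mat k k (\<lambda>(r, c). Amat_entry v \<sigma> r (if c < j then c else c + 1)))"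

end

theory Submission
  imports Defs
begin

(* Only the first k coordinates enter Y(sigma,k) and its minors. Extending the k chosen vertices
   to d of them and projecting away the last coordinate, the recursive definition yields a
   lattice-face (d-1)-polytope containing the projected points; repeating this reaches dimension k.
   There the k points project to an affinely independent set, so det Y <> 0, and their affine hull
   is a non-vertical hyperplane x_k = a_0 + a_1 x_1 + ... + a_(k-1) x_(k-1). Its lattice points
   project onto Z^(k-1), so this affine function is integral on Z^(k-1) and all a_i are integers.
   Finally the minor equals Y T, where T has unit columns and the column a, so the ratio is
   det T, an integer. *)

definition hom_coord :: "pt \<Rightarrow> nat \<Rightarrow> real" where
  "hom_coord p c = (if c = 0 then 1 else p c)"

definition hom_coord_mat :: "(nat \<Rightarrow> pt) \<Rightarrow> nat \<Rightarrow> real mat" where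
  "hom_coord_mat q m = mat m m (\<lambda>(r, c). hom_coord (q r) c)"

definition minor_col :: "nat \<Rightarrow> nat \<Rightarrow> nat" where
  "minor_col j c = (if c < j then c else c + 1)"

definition hom_coord_minor :: "(nat \<Rightarrow> pt) \<Rightarrow> nat \<Rightarrow> nat \<Rightarrow> real mat" where
  "hom_coord_minor q m j = mat m m (\<lambda>(r, c). hom_coord (q r) (minor_col j c))"

text \<open>For \<open>j \<ge> m\<close> no column among the first \<open>m\<close> is deleted and the ratio is \<open>1\<close>.\<close>
definition minor_ratios_Ints :: "(nat \<Rightarrow> pt) \<Rightarrow> nat \<Rightarrow> bool" where
  "minor_ratios_Ints q m \<longleftrightarrow> det (hom_coord_mat q m) \<noteq> 0 \<and>
     (\<forall>j. det (hom_coord_minor q m j) / det (hom_coord_mat q m) \<in> \<int>)"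

lemma hom_coord_mat_carrier [simp]: "hom_coord_mat q m \<in> carrier_mat m m"
  by (simp add: hom_coord_mat_def)

lemma hom_coord_mat_dim [simp]: "dim_row (hom_coord_mat q m) = m" "dim_col (hom_coord_mat q m) = m"
  by (simp_all add: hom_coord_mat_def)

lemma hom_coord_minor_dim [simp]:
  "dim_row (hom_coord_minor q m j) = m" "dim_col (hom_coord_minor q m j) = m"
  by (simp_all add: hom_coord_minor_def)

lemma sum_hom_coord:
  assumes "0 < m"
  shows "(\<Sum>i = 0..<m. hom_coord p i * a i) = a 0 + (\<Sum>i = 1..<m. a i * p i)"
proof -
  have "{0..<m} = insert 0 {1..<m}" using assms by auto
  then show ?thesis by (simp add: hom_coord_def mult.commute)
qed

lemma det_Ints:
  assumes "A \<in> carrier_mat n n" and "\<And>i j. i < n \<Longrightarrow> j < n \<Longrightarrow> A $$ (i, j) \<in> \<int>"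
  shows "det (A :: real mat) \<in> \<int>"
proof -
  have "A = of_int_hom.mat_hom (map_mat floor A)"
    using assms by (intro eq_matI) (auto simp: of_int_floor)
  then show ?thesis by (metis of_int_hom.hom_det Ints_of_int)
qed

lemma affine_dependence_imp_not_aff_indep:
  fixes q :: "nat \<Rightarrow> pt" and c :: "nat \<Rightarrow> real"
  assumes inj: "inj_on q {0..<m}" and r0: "r0 < m" "c r0 \<noteq> 0"
    and sum_c: "(\<Sum>r = 0..<m. c r) = 0" and sum_cq: "\<And>i. (\<Sum>r = 0..<m. c r * q r i) = 0"
  shows "\<not> aff_indep (q ` {0..<m})"
proof
  define I where "I = {0..<m} - {r0}"
  define g where "g v = - c (inv_into {0..<m} q v) / c r0" for v
  have g: "g (q s) = - c s / c r0" if "s \<in> I" for s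
    using that inv_into_f_f[OF inj] by (auto simp: g_def I_def)
  have inj_I: "inj_on q I" using inj by (auto simp: I_def inj_on_def)
  have split: "(\<Sum>r = 0..<m. f r) = f r0 + (\<Sum>r\<in>I. f r)" for f :: "nat \<Rightarrow> real"
    using sum.remove[of "{0..<m}" r0 f] r0 by (simp add: I_def)
  have "q r0 \<in> aff_span (q ` I)"
    unfolding aff_span_def
  proof (intro CollectI exI conjI ext)
    have "sum g (q ` I) = - (\<Sum>s\<in>I. c s) / c r0"
      using g by (simp add: sum.reindex[OF inj_I] sum_negf sum_divide_distrib)
    moreover have "(\<Sum>s\<in>I. c s) = - c r0" using split[of c] sum_c by simp
    ultimately show "sum g (q ` I) = 1" using r0 by simp
    fix i
    have "(\<Sum>v\<in>q ` I. g v * v i) = - (\<Sum>s\<in>I. c s * q s i) / c r0"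
      using g by (simp add: sum.reindex[OF inj_I] sum_negf sum_divide_distrib)
    moreover have "(\<Sum>s\<in>I. c s * q s i) = - (c r0 * q r0 i)"
      using split[of "\<lambda>r. c r * q r i"] sum_cq[of i] by simp
    ultimately show "q r0 i = (\<Sum>v\<in>q ` I. g v * v i)" using r0 by simp
  qed
  moreover have "q ` {0..<m} - {q r0} = q ` I"
    using inj r0 by (auto simp: I_def inj_on_def)
  moreover assume "aff_indep (q ` {0..<m})"
  then have "q r0 \<notin> aff_span (q ` {0..<m} - {q r0})" using r0 by (simp add: aff_indep_def)
  ultimately show False by simp
qed

lemma hom_coord_mat_det_nonzero:
  assumes inj: "inj_on q {0..<m}" and q_Rd: "\<And>r. r < m \<Longrightarrow> q r \<in> Rd (m - 1)"
    and indep: "aff_indep (q ` {0..<m})"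
  shows "det (hom_coord_mat q m) \<noteq> 0"
proof
  let ?Y = "hom_coord_mat q m"
  assume "det ?Y = 0"
  then have "det (transpose_mat ?Y) = 0" by (simp add: det_transpose[OF hom_coord_mat_carrier])
  then obtain c where c: "c \<in> carrier_vec m" "c \<noteq> 0\<^sub>v m" "transpose_mat ?Y *\<^sub>v c = 0\<^sub>v m"
    using det_0_iff_vec_prod_zero_field[of "transpose_mat ?Y" m] by auto
  have col: "(\<Sum>r = 0..<m. c $ r * hom_coord (q r) i) = 0" if "i < m" for i
    using arg_cong[OF c(3), of "\<lambda>w. w $ i"] that c(1)
    by (simp add: hom_coord_mat_def scalar_prod_def mult.commute)
  obtain r0 where r0: "r0 < m" "c $ r0 \<noteq> 0" using c(1,2) by (auto simp: vec_eq_iff)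
  moreover have "(\<Sum>r = 0..<m. c $ r) = 0" using col[of 0] r0 by (simp add: hom_coord_def)
  moreover have "(\<Sum>r = 0..<m. c $ r * q r i) = 0" for i
  proof (cases "0 < i \<and> i < m")
    case True
    then show ?thesis using col[of i] by (simp add: hom_coord_def)
  next
    case False
    then have "q r i = 0" if "r < m" for r using q_Rd[OF that] that by (auto simp: Rd_def)
    then show ?thesis by simp
  qed
  ultimately show False
    using affine_dependence_imp_not_aff_indep[OF inj, of r0 "\<lambda>r. c $ r"] indep by blast
qed

lemma aff_span_affine_relation:
  assumes rel: "\<And>v. v \<in> V \<Longrightarrow> v m = a 0 + (\<Sum>i = 1..<m. a i * v i)" and x: "x \<in> aff_span V"
  shows "x m = a 0 + (\<Sum>i = 1..<m. a i * x i)"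
proof -
  obtain g where g: "sum g V = 1" "x = (\<lambda>i. \<Sum>v\<in>V. g v * v i)"
    using x unfolding aff_span_def by blast
  have "x m = (\<Sum>v\<in>V. g v * (a 0 + (\<Sum>i = 1..<m. a i * v i)))"
    using g(2) rel by simp
  also have "\<dots> = a 0 * sum g V + (\<Sum>i = 1..<m. a i * (\<Sum>v\<in>V. g v * v i))"
    by (simp add: distrib_left sum.distrib sum_distrib_left sum_distrib_right mult_ac sum.swap[of _ V])
  finally show ?thesis using g by simp
qed

lemma Ints_coeffs_if_Ints_on_lattice:
  assumes int: "\<And>e. e \<in> lattice_pts (m - 1) \<Longrightarrow> a 0 + (\<Sum>l = 1..<m. a l * e l) \<in> \<int>"
    and "i < m"
  shows "a i \<in> \<int>"
proof -
  have a0: "a 0 \<in> \<int>" using int[of "\<lambda>_. 0"] by (simp add: lattice_pts_def Rd_def)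
  show ?thesis
  proof (cases "i = 0")
    case False
    define e :: pt where "e l = (if l = i then 1 else 0)" for l
    have "e \<in> lattice_pts (m - 1)" using False \<open>i < m\<close> by (auto simp: e_def lattice_pts_def Rd_def)
    moreover have "(\<Sum>l = 1..<m. a l * e l) = a i"
      using False \<open>i < m\<close> by (simp add: e_def if_distrib[of "(*) _"] cong: if_cong)
    ultimately have "a 0 + a i \<in> \<int>" using int by metis
    then show ?thesis using a0 by (metis Ints_diff add_diff_cancel_left')
  qed (use a0 in simp)
qed

lemma hom_coord_affine_relation_exists:
  assumes "det (hom_coord_mat q m) \<noteq> 0"
  obtains a where "\<And>r. r < m \<Longrightarrow> q r m = a 0 + (\<Sum>i = 1..<m. a i * q r i)"
proof (cases "m = 0")
  case False
  let ?Y = "hom_coord_mat q m"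
  obtain B where B: "B \<in> carrier_mat m m" "?Y * B = 1\<^sub>m m"
    using det_non_zero_imp_unit[OF hom_coord_mat_carrier assms, of "()"]
    by (auto simp: Units_def ring_mat_def)
  define h where "h = vec m (\<lambda>r. q r m)"
  define a where "a = B *\<^sub>v h"
  have a: "a \<in> carrier_vec m" using B(1) by (simp add: a_def h_def)
  have "?Y *\<^sub>v a = h"
    using B by (simp add: a_def h_def assoc_mult_mat_vec[symmetric, of _ m m _ m])
  have "q r m = a $ 0 + (\<Sum>i = 1..<m. a $ i * q r i)" if "r < m" for r
  proof -
    have "q r m = (?Y *\<^sub>v a) $ r" using \<open>?Y *\<^sub>v a = h\<close> that by (simp add: h_def)
    also have "\<dots> = (\<Sum>i = 0..<m. hom_coord (q r) i * a $ i)"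
      using that a by (simp add: hom_coord_mat_def scalar_prod_def)
    also have "\<dots> = a $ 0 + (\<Sum>i = 1..<m. a $ i * q r i)" using False by (simp add: sum_hom_coord)
    finally show ?thesis .
  qed
  then show thesis using that[of "\<lambda>i. a $ i"] by blast
qed (use that in simp)

lemma hom_coord_minor_factor:
  assumes "0 < m" and rel: "\<And>r. r < m \<Longrightarrow> q r m = a 0 + (\<Sum>i = 1..<m. a i * q r i)"
  shows "hom_coord_minor q m j = hom_coord_mat q m *
    mat m m (\<lambda>(i, c). if minor_col j c < m then of_bool (i = minor_col j c) else a i)"
    (is "_ = _ * ?T")
proof (rule eq_matI)
  fix r c assume "r < dim_row (hom_coord_mat q m * ?T)" "c < dim_col (hom_coord_mat q m * ?T)"
  then have rc: "r < m" "c < m" by simp_all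
  show "hom_coord_minor q m j $$ (r, c) = (hom_coord_mat q m * ?T) $$ (r, c)"
  proof (cases "minor_col j c < m")
    case True
    then show ?thesis using rc
      by (simp add: hom_coord_minor_def hom_coord_mat_def scalar_prod_def of_bool_def
          if_distrib[of "(*) _"] cong: if_cong)
  next
    case False
    then have "minor_col j c = m" using rc by (auto simp: minor_col_def)
    then show ?thesis using rc rel[of r] \<open>0 < m\<close>
      by (simp add: hom_coord_minor_def hom_coord_mat_def scalar_prod_def sum_hom_coord)
        (simp add: hom_coord_def)
  qed
qed simp_all

lemma hom_coord_minor_div_det_Ints:
  assumes "0 < m" and det: "det (hom_coord_mat q m) \<noteq> 0"
    and lift: "lattice_pts (m - 1) \<subseteq> proj m ` (aff_span (q ` {0..<m}) \<inter> lattice_pts m)"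
  shows "det (hom_coord_minor q m j) / det (hom_coord_mat q m) \<in> \<int>"
proof -
  obtain a where rel: "\<And>r. r < m \<Longrightarrow> q r m = a 0 + (\<Sum>i = 1..<m. a i * q r i)"
    using hom_coord_affine_relation_exists[OF det] by blast
  have "a 0 + (\<Sum>i = 1..<m. a i * e i) \<in> \<int>" if e: "e \<in> lattice_pts (m - 1)" for e
  proof -
    obtain x where x: "x \<in> aff_span (q ` {0..<m})" "x \<in> lattice_pts m" "proj m x = e"
      using subsetD[OF lift e] by auto
    have "x m = a 0 + (\<Sum>i = 1..<m. a i * x i)"
      by (rule aff_span_affine_relation[OF _ x(1)]) (use rel in auto)
    moreover have "x m \<in> \<int>" using x(2) \<open>0 < m\<close> by (simp add: lattice_pts_def)
    moreover have "x i = e i" if "i < m" for i using x(3) that by (auto simp: proj_def)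
    ultimately show ?thesis by simp
  qed
  then have a_Ints: "a i \<in> \<int>" if "i < m" for i
    using Ints_coeffs_if_Ints_on_lattice that by blast
  define T where "T = mat m m (\<lambda>(i, c). if minor_col j c < m then of_bool (i = minor_col j c) else a i)"
  have "det (hom_coord_minor q m j) = det (hom_coord_mat q m) * det T"
    using hom_coord_minor_factor[OF \<open>0 < m\<close> rel] det_mult[OF hom_coord_mat_carrier, of T m q]
    by (simp add: T_def)
  moreover have "det T \<in> \<int>" by (rule det_Ints[of _ m]) (auto simp: T_def a_Ints)
  ultimately show ?thesis using det by simp
qed

lemma lattice_face_card:
  assumes "lattice_face m V"
  shows "finite V" and "m + 1 \<le> card V" and "V \<subseteq> Rd m"
proof -
  consider "m = 0" | "m = 1" | n where "m = Suc (Suc n)"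
    by (metis One_nat_def not0_implies_Suc)
  then have "finite V \<and> m + 1 \<le> card V \<and> V \<subseteq> Rd m"
  proof cases
    case (3 n)
    then obtain W where "W \<subseteq> V" "card W = m + 1" "finite V" "V \<subseteq> Rd m"
      using assms by auto
    then show ?thesis using card_mono[of V W] by auto
  qed (use assms in auto)
  then show "finite V" and "m + 1 \<le> card V" and "V \<subseteq> Rd m" by simp_all
qed

lemma lattice_face_simplex_aff_indep:
  assumes lf: "lattice_face m V" and card: "card V = m + 1"
  shows "aff_indep V"
proof -
  consider "m = 0" | "m = 1" | n where "m = Suc (Suc n)"
    by (metis One_nat_def not0_implies_Suc)
  then show ?thesis
  proof cases
    case 2
    then have "card V = 2" using card by simp
    then obtain a b where ab: "V = {a, b}" "a \<noteq> b" by (meson card_2_iff)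
    then have "{a, b} - {a} = {b}" "{a, b} - {b} = {a}" by auto
    then show ?thesis using ab by (simp add: aff_indep_def aff_span_def)
  next
    case (3 n)
    then obtain W where W: "W \<subseteq> V" "card W = m + 1" "aff_indep W" "finite V"
      using lf by auto
    then have "W = V" using card card_subset_eq by metis
    then show ?thesis using W by simp
  qed (use lf in simp)
qed

lemma lattice_face_proj:
  assumes lf: "lattice_face (Suc (Suc n)) V" and U: "U \<subseteq> V" "card U = Suc (Suc n)"
  shows "inj_on (proj (Suc (Suc n))) U"
    and "lattice_face (Suc n) (proj (Suc (Suc n)) ` U)"
    and "proj (Suc (Suc n)) ` (aff_span U \<inter> lattice_pts (Suc (Suc n))) = lattice_pts (Suc n)"
proof -
  let ?p = "proj (Suc (Suc n))"
  have lf_verts: "lattice_face (Suc n) (verts (?p ` U))"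
    and lift: "?p ` (aff_span U \<inter> lattice_pts (Suc (Suc n))) = lattice_pts (Suc n)"
    using lf U by auto
  have fin: "finite U" using U(2) card.infinite by fastforce
  have sub: "verts (?p ` U) \<subseteq> ?p ` U" by (auto simp: verts_def)
  \<comment> \<open>the projection has at most \<open>card U\<close> points, but at least that many vertices\<close>
  have "card U \<le> card (verts (?p ` U))" using lattice_face_card(2)[OF lf_verts] U(2) by simp
  moreover have "card (verts (?p ` U)) \<le> card (?p ` U)" using card_mono[OF _ sub] fin by simp
  moreover have "card (?p ` U) \<le> card U" using card_image_le[OF fin] .
  ultimately have card_eq: "card (verts (?p ` U)) = card (?p ` U)" "card (?p ` U) = card U"
    by simp_all
  show "inj_on ?p U" using eq_card_imp_inj_on[OF fin card_eq(2)] .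
  have "verts (?p ` U) = ?p ` U" using card_subset_eq[OF _ sub card_eq(1)] fin by simp
  then show "lattice_face (Suc n) (?p ` U)" using lf_verts by simp
  show "?p ` (aff_span U \<inter> lattice_pts (Suc (Suc n))) = lattice_pts (Suc n)" by (rule lift)
qed

lemma hom_coord_mat_proj: "k \<le> M \<Longrightarrow> hom_coord_mat (\<lambda>r. proj M (q r)) k = hom_coord_mat q k"
  by (rule eq_matI) (auto simp: hom_coord_mat_def hom_coord_def proj_def)

lemma hom_coord_minor_proj: "k < M \<Longrightarrow> hom_coord_minor (\<lambda>r. proj M (q r)) k j = hom_coord_minor q k j"
  by (rule eq_matI) (auto simp: hom_coord_minor_def hom_coord_def proj_def minor_col_def)

lemma lattice_face_dim1_minor_ratios_Ints:
  assumes "lattice_face 1 V" and "q 0 \<in> V"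
  shows "minor_ratios_Ints q 1"
proof -
  have "hom_coord_mat q 1 = 1\<^sub>m 1" by (rule eq_matI) (auto simp: hom_coord_mat_def hom_coord_def)
  moreover have "det (hom_coord_minor q 1 j) \<in> \<int>" for j
    using assms by (intro det_Ints[of _ 1]) (auto simp: hom_coord_minor_def hom_coord_def minor_col_def)
  ultimately show ?thesis by (simp add: minor_ratios_Ints_def)
qed

lemma lattice_face_full_minor_ratios_Ints:
  assumes lf: "lattice_face m V" and "2 \<le> m" and inj: "inj_on q {0..<m}" and qV: "q ` {0..<m} \<subseteq> V"
  shows "minor_ratios_Ints q m"
proof -
  obtain n where m: "m = Suc (Suc n)" using \<open>2 \<le> m\<close> by (metis add_2_eq_Suc le_Suc_ex)
  define U where "U = q ` {0..<m}"
  have "card U = m" using card_image[OF inj] by (simp add: U_def)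
  note facet = lattice_face_proj[OF lf[unfolded m] qV[folded U_def] this[unfolded m], folded m]
  define q' where "q' = (\<lambda>r. proj m (q r))"
  have img: "q' ` {0..<m} = proj m ` U" by (auto simp: q'_def U_def)
  have "inj_on q' {0..<m}"
    using comp_inj_on[OF inj] facet(1) by (simp add: q'_def U_def o_def)
  moreover have "q' r \<in> Rd (m - 1)" if "r < m" for r
  proof -
    have "q' r \<in> q' ` {0..<m}" using that by simp
    then show ?thesis using lattice_face_card(3)[OF facet(2)] img m by auto
  qed
  moreover have "aff_indep (q' ` {0..<m})"
    using lattice_face_simplex_aff_indep[OF facet(2)] card_image[OF facet(1)] \<open>card U = m\<close> img m
    by simp
  ultimately have "det (hom_coord_mat q' m) \<noteq> 0" by (rule hom_coord_mat_det_nonzero)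
  then have det: "det (hom_coord_mat q m) \<noteq> 0" using hom_coord_mat_proj[of m m q] by (simp add: q'_def)
  have "lattice_pts (m - 1) \<subseteq> proj m ` (aff_span (q ` {0..<m}) \<inter> lattice_pts m)"
    using facet(3) m by (simp add: U_def)
  then show ?thesis using hom_coord_minor_div_det_Ints[OF _ det] det m by (simp add: minor_ratios_Ints_def)
qed

lemma lattice_face_minor_ratios_Ints:
  assumes "lattice_face m V" and "inj_on q {0..<k}" and "q ` {0..<k} \<subseteq> V" and "1 \<le> k" and "k \<le> m"
  shows "minor_ratios_Ints q k"
  using assms
proof (induction m arbitrary: V q)
  case 0
  then show ?case by simp
next
  case (Suc m)
  show ?case
  proof (cases "k = Suc m")
    case True
    show ?thesis
    proof (cases "m = 0")
      case True
      then show ?thesis using lattice_face_dim1_minor_ratios_Ints Suc.prems \<open>k = Suc m\<close> by auto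
    next
      case False
      then show ?thesis using lattice_face_full_minor_ratios_Ints Suc.prems \<open>k = Suc m\<close> by auto
    qed
  next
    case False
    then obtain n where m: "m = Suc n" using Suc.prems(4,5) by (cases m) auto
    let ?S = "q ` {0..<k}"
    have "card ?S = k" using card_image[OF Suc.prems(2)] by simp
    then obtain U where U: "?S \<subseteq> U" "U \<subseteq> V" "card U = Suc m"
      using exists_subset_between[of ?S "Suc m" V] lattice_face_card[OF Suc.prems(1)] Suc.prems(3,5)
      by auto
    note facet = lattice_face_proj[OF Suc.prems(1)[unfolded m] U(2) U(3)[unfolded m], folded m]
    define q' where "q' = (\<lambda>r. proj (Suc m) (q r))"
    have "inj_on q' {0..<k}"
      using comp_inj_on[OF Suc.prems(2) inj_on_subset[OF facet(1) U(1)]] by (simp add: q'_def o_def)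
    moreover have "q' ` {0..<k} \<subseteq> proj (Suc m) ` U" using U(1) by (auto simp: q'_def)
    ultimately have "minor_ratios_Ints q' k"
      using Suc.IH[OF facet(2)] Suc.prems(4,5) False by simp
    moreover have "k < Suc m" using Suc.prems(5) False by simp
    ultimately show ?thesis
      by (simp add: minor_ratios_Ints_def q'_def hom_coord_mat_proj hom_coord_minor_proj)
  qed
qed

theorem mainTheorem8:
  fixes d :: nat and v :: "nat \<Rightarrow> pt" and \<sigma> :: "nat \<Rightarrow> nat" and k j :: nat
  assumes "1 \<le> d"
    and "inj_on v {1..d+1}"
    and "lattice_face d (v ` {1..d+1})"
    and "\<sigma> permutes {1..d}"
    and "1 \<le> k" and "k \<le> d" and "j \<le> k - 1"
  shows "det (Ymat v \<sigma> k) \<noteq> 0 \<and> minor_m v \<sigma> k j / det (Ymat v \<sigma> k) \<in> \<int>"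
proof -
  define q where "q = (\<lambda>r. v (\<sigma> (r + 1)))"
  have \<sigma>_range: "\<sigma> (r + 1) \<in> {1..d}" if "r < k" for r
    using permutes_in_image[OF assms(4)] that assms(6) by auto
  have "inj_on q {0..<k}"
  proof (rule inj_onI)
    fix r s assume "r \<in> {0..<k}" "s \<in> {0..<k}" "q r = q s"
    then have "\<sigma> (r + 1) = \<sigma> (s + 1)"
      using \<sigma>_range[of r] \<sigma>_range[of s] assms(2) by (auto simp: q_def inj_on_def)
    then show "r = s" using permutes_inj[OF assms(4)] by (auto simp: inj_def)
  qed
  moreover have "q ` {0..<k} \<subseteq> v ` {1..d+1}" using \<sigma>_range by (force simp: q_def)
  ultimately have "minor_ratios_Ints q k"
    using lattice_face_minor_ratios_Ints[OF assms(3)] assms(5,6) by blast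
  moreover have "Ymat v \<sigma> k = hom_coord_mat q k"
    by (rule eq_matI) (simp_all add: Ymat_def hom_coord_mat_def hom_coord_def q_def)
  moreover have "minor_m v \<sigma> k j = det (hom_coord_minor q k j)"
    unfolding minor_m_def
    by (rule arg_cong[where f = det], rule eq_matI)
      (simp_all add: hom_coord_minor_def hom_coord_def Amat_entry_def minor_col_def q_def)
  ultimately show ?thesis by (simp add: minor_ratios_Ints_def)
qed

end
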